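(* Suppose (P1), (P2), (P4), (A1), (A2), (A3b), (A4b) hold (same $\alpha$), and let $F_{\lim}$ be the almost-sure limit of $F(\theta_k)$. Then $\sup_{k\ge0}\mathbb{E}[F(\theta_k)]<\infty$, and for every $\gamma\in[0,1)$, $$\lim_{k\to\infty}\mathbb{E}\big[|(F(\theta_k)-F_{l.b.})^\gamma-(F_{\lim}-F_{l.b.})^\gamma|\big]=0.$$
   Context: Setting: $X$ is a random variable taking values in a measurable space $\mathcal{X}$; $f:\mathbb{R}^p\times\mathcal{X}\to\mathbb{R}$ is such that $f(\cdot,x)$ is differentiable for every $x$, with gradient in the first argument denoted $\dot f(\theta,x)$ (measurable in $x$); $F(\theta)=\mathbb{E}[f(\theta,X)]$ is finite and differentiable with gradient $\dot F(\theta)$. SGD: $\theta_0\in\mathbb{R}^p$ is fixed (deterministic), $X_1,X_2,\dots$ are i.i.d. copies of $X$, $M_0,M_1,\dots$ are deterministic $p\times p$ matrices, and $\theta_{k+1}=\theta_k - M_k\dot f(\theta_k,X_{k+1})$ for $k\ge 0$. $\lambda_{\max}(\cdot)$ denotes the largest eigenvalue of a symmetric matrix. Under these hypotheses $F(\theta_k)$ converges almost surely to an integrable random variable $F_{\lim}$. (P1) Every $M_k$ is symmetric positive definite. (P2) For some $\alpha\in(0,1]$, $S:=\sum_{k=1}^\infty \lambda_{\max}(M_k)^{1+\alpha}<\infty$. (P4) $\lim_{k\to\infty}\lambda_{\max}(M_k)^\alpha\kappa(M_k)=0$, where $\kappa(M)=\|M\|_2\|M^{-1}\|_2$. (A1)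 There is $F_{l.b.}\in\mathbb{R}$ with $F(\theta)\ge F_{l.b.}$ for all $\theta$. (A2) $\mathbb{E}[\dot f(\theta,X)]=\dot F(\theta)$ for all $\theta$. (A3b) There are $C_1,C_2\ge0$, $C_3\ge1$ with $\mathbb{E}[\|\dot f(\theta,X)\|_2^2]\le C_1+C_2(F(\theta)-F_{l.b.})+C_3\|\dot F(\theta)\|_2^2$ for all $\theta$. (A4b) $\dot F$ is globally $\alpha$-Hölder continuous: there is $L>0$ with $\|\dot F(\varphi_1)-\dot F(\varphi_2)\|_2\le L\|\varphi_1-\varphi_2\|_2^\alpha$ for all $\varphi_1,\varphi_2\in\mathbb{R}^p$. *)

theory Defs
  imports "HOL-Probability.Probability"
begin

definition lambda_max :: "real^'n^'n \<Rightarrow> real" where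
  "lambda_max A = Max {c. \<exists>v::real^'n. v \<noteq> 0 \<and> A *v v = c *\<^sub>R v}"

definition mat_norm2 :: "real^'n^'n \<Rightarrow> real" where
  "mat_norm2 A = onorm (\<lambda>x. A *v x)"

definition cond_num :: "real^'n^'n \<Rightarrow> real" where
  "cond_num A = mat_norm2 A * mat_norm2 (matrix_inv A)"

text \<open>Real power x^g for x \<ge> 0 and g \<ge> 0 with the usual convention x^0 = 1
  (Isabelle's powr has 0 powr 0 = 0, hence the case split).\<close>
definition rpow :: "real \<Rightarrow> real \<Rightarrow> real" where
  "rpow x g = (if g = 0 then 1 else x powr g)"

end

theory Submission
  imports Defs
begin

text \<open>
  Write e_k = E[F(\<theta>_k) - F_lb]. Given \<theta>_k, the Hoelder descent inequality bounds F(\<theta>_(k+1))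
  by F(\<theta>_k) minus the nonnegative term \<nabla>F(\<theta>_k) \<bullet> M_k \<nabla>F(\<theta>_k) plus
  L |M_k \<nabla>f(\<theta>_k, X_(k+1))|^(1+\<alpha>). By (A3b) and the bound |\<nabla>F|^2 \<le> 1 + K (F - F_lb), which
  Hoelder continuity and (A1) imply, the mean of the last term is at most c_k (1 + e_k) with c_k
  proportional to \<lambda>_max(M_k)^(1+\<alpha>). Hence e_(k+1) \<le> (1 + c_k) e_k + c_k, and since the c_k are
  summable by (P2), the e_k stay bounded. For 0 < \<gamma> < 1, truncating the \<gamma>-th powers at a level T
  costs at most T^(1 - 1/\<gamma>) times first moments, which are bounded uniformly (for F_lim by
  Fatou); dominated convergence of the truncated powers then gives convergence in mean.
\<close>

section \<open>Spectral bound for symmetric positive definite matrices\<close>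

lemma matrix_vector_mult_inner_symmetric:
  fixes A :: "real^'n^'n"
  assumes "transpose A = A"
  shows "(A *v x) \<bullet> y = x \<bullet> (A *v y)"
proof -
  have "A *v x = x v* transpose A" by simp
  then show ?thesis using dot_lmul_matrix[of x "transpose A" y] assms by simp
qed

lemma finite_eigenvalues_symmetric:
  fixes A :: "real^'n^'n"
  assumes sym: "transpose A = A"
  shows "finite {c. \<exists>v::real^'n. v \<noteq> 0 \<and> A *v v = c *\<^sub>R v}"
proof -
  define E where "E = {c. \<exists>v::real^'n. v \<noteq> 0 \<and> A *v v = c *\<^sub>R v}"
  define V where "V c = (SOME v::real^'n. v \<noteq> 0 \<and> A *v v = c *\<^sub>R v)" for c
  have V: "V c \<noteq> 0 \<and> A *v V c = c *\<^sub>R V c" if "c \<in> E" for c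
    using someI_ex[of "\<lambda>v. v \<noteq> 0 \<and> A *v v = c *\<^sub>R v"] that unfolding E_def V_def by blast
  have "inj_on V E"
  proof (rule inj_onI)
    fix c d assume "c \<in> E" "d \<in> E" "V c = V d"
    then have "c *\<^sub>R V c = d *\<^sub>R V c" "V c \<noteq> 0" using V by metis+
    then show "c = d" by (metis scaleR_right_imp_eq)
  qed
  moreover have "pairwise orthogonal (V ` E)"
  proof (clarsimp simp: pairwise_def orthogonal_def)
    fix c d assume c: "c \<in> E" and d: "d \<in> E" and "V c \<noteq> V d"
    then have "c \<noteq> d" by auto
    moreover have "c * (V c \<bullet> V d) = d * (V c \<bullet> V d)"
      using matrix_vector_mult_inner_symmetric[OF sym, of "V c" "V d"] V[OF c] V[OF d] by simp
    ultimately show "V c \<bullet> V d = 0" by simp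
  qed
  moreover have "0 \<notin> V ` E" using V by auto
  ultimately have "independent (V ` E)" using pairwise_orthogonal_independent by blast
  then have "finite (V ` E)" by (rule finiteI_independent)
  with \<open>inj_on V E\<close> show ?thesis unfolding E_def by (simp add: finite_image_iff)
qed

lemma eigenvalue_le_lambda_max:
  fixes A :: "real^'n^'n"
  assumes "transpose A = A" and "v \<noteq> 0" and "A *v v = c *\<^sub>R v"
  shows "c \<le> lambda_max A"
  unfolding lambda_max_def using assms finite_eigenvalues_symmetric by (intro Max_ge) auto

lemma nonpos_if_linear_quadratic_nonpos:
  fixes a c :: real
  assumes "\<And>t. t > 0 \<Longrightarrow> 2 * t * a + t\<^sup>2 * c \<le> 0"
  shows "a \<le> 0"
proof (rule ccontr)
  assume "\<not> a \<le> 0"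
  define t where "t = a / (\<bar>c\<bar> + 1)"
  have t: "t > 0" "t * (\<bar>c\<bar> + 1) = a" using \<open>\<not> a \<le> 0\<close> by (auto simp: t_def)
  then have "t\<^sup>2 * \<bar>c\<bar> < 2 * t * a"
    using \<open>\<not> a \<le> 0\<close> by (simp add: power2_eq_square algebra_simps)
  moreover have "- (t\<^sup>2 * \<bar>c\<bar>) \<le> t\<^sup>2 * c" using mult_left_mono[of "-\<bar>c\<bar>" c "t\<^sup>2"] by simp
  ultimately show False using assms[OF t(1)] by linarith
qed

lemma matrix_vector_norm_attains_max:
  fixes A :: "real^'n^'n"
  obtains u where "norm u = 1" and "\<And>w. norm (A *v w) \<le> norm (A *v u) * norm w"
proof -
  have "continuous_on (sphere (0::real^'n) 1) (\<lambda>w. norm (A *v w))"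
    by (intro continuous_on_norm linear_continuous_on matrix_vector_mul_bounded_linear)
  moreover have "sphere (0::real^'n) 1 \<noteq> {}" by simp
  ultimately obtain u where u: "u \<in> sphere 0 1"
    and max: "\<And>w. w \<in> sphere 0 1 \<Longrightarrow> norm (A *v w) \<le> norm (A *v u)"
    using continuous_attains_sup[OF compact_sphere] by blast
  have "norm (A *v w) \<le> norm (A *v u) * norm w" for w
  proof (cases "w = 0")
    case False
    then have "norm (A *v ((1 / norm w) *\<^sub>R w)) \<le> norm (A *v u)" by (intro max) simp
    with False show ?thesis by (simp add: matrix_vector_mult_scaleR field_simps)
  qed simp
  with u that show ?thesis by simp
qed

lemma symmetric_matrix_sq_eigenvector_at_max:
  fixes A :: "real^'n^'n"
  assumes sym: "transpose A = A" and u: "norm u = 1"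
    and max: "\<And>w. norm (A *v w) \<le> norm (A *v u) * norm w"
  shows "A *v (A *v u) = (norm (A *v u))\<^sup>2 *\<^sub>R u"
proof -
  define r where "r = norm (A *v u)"
  define h where "h = A *v (A *v u) - r\<^sup>2 *\<^sub>R u"
  \<comment> \<open>Maximality of u along the ray u + t h: the first-order term 2 t |h|^2 has to vanish.\<close>
  have "2 * t * (h \<bullet> h) + t\<^sup>2 * ((A *v h) \<bullet> (A *v h) - r\<^sup>2 * (h \<bullet> h)) \<le> 0" if "t > 0" for t
  proof -
    have "(norm (A *v (u + t *\<^sub>R h)))\<^sup>2 \<le> (r * norm (u + t *\<^sub>R h))\<^sup>2"
      using max r_def by (simp add: power_mono)
    then have *: "(A *v u + t *\<^sub>R (A *v h)) \<bullet> (A *v u + t *\<^sub>R (A *v h))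
        \<le> r\<^sup>2 * ((u + t *\<^sub>R h) \<bullet> (u + t *\<^sub>R h))"
      by (simp add: power2_norm_eq_inner power_mult_distrib matrix_vector_right_distrib
          matrix_vector_mult_scaleR)
    have uu: "u \<bullet> u = 1" using u by (simp add: power2_norm_eq_inner[symmetric])
    have Au: "(A *v u) \<bullet> (A *v u) = r\<^sup>2" unfolding r_def by (simp add: power2_norm_eq_inner)
    have Ah: "(A *v u) \<bullet> (A *v h) = h \<bullet> h + r\<^sup>2 * (h \<bullet> u)"
      using matrix_vector_mult_inner_symmetric[OF sym, of "A *v u" h]
      by (simp add: h_def inner_diff_left inner_commute)
    show ?thesis
      using * uu Au Ah
      by (simp add: inner_add_left inner_add_right power2_eq_square algebra_simps inner_commute)
  qed
  then have "h \<bullet> h \<le> 0" by (rule nonpos_if_linear_quadratic_nonpos)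
  then have "h = 0" by (metis antisym inner_eq_zero_iff inner_ge_zero)
  then show ?thesis by (simp add: h_def r_def)
qed

lemma
  fixes A :: "real^'n^'n"
  assumes sym: "transpose A = A" and pd: "\<And>v. v \<noteq> 0 \<Longrightarrow> v \<bullet> (A *v v) > 0"
  shows lambda_max_pos: "0 < lambda_max A"
    and norm_matrix_vector_le_lambda_max: "norm (A *v v) \<le> lambda_max A * norm v"
proof -
  obtain u where u: "norm u = 1" and max: "\<And>w. norm (A *v w) \<le> norm (A *v u) * norm w"
    using matrix_vector_norm_attains_max[of A] by blast
  define r where "r = norm (A *v u)"
  have uAu: "u \<bullet> (A *v u) > 0" using pd[of u] u by (metis norm_zero zero_neq_one)
  then have r: "r > 0" by (auto simp: r_def)
  \<comment> \<open>(A - r)(A + r) u = 0 and (A + r) u \<noteq> 0 by positivity, so r is an eigenvalue.\<close>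
  define w where "w = A *v u + r *\<^sub>R u"
  have "A *v w = r *\<^sub>R w"
    using symmetric_matrix_sq_eigenvector_at_max[OF sym u max]
    by (simp add: w_def r_def matrix_vector_right_distrib matrix_vector_mult_scaleR
        power2_eq_square scaleR_add_right)
  moreover have "w \<noteq> 0"
  proof
    assume "w = 0"
    then have "A *v u = - r *\<^sub>R u" by (simp add: w_def eq_neg_iff_add_eq_0)
    then have "u \<bullet> (A *v u) = - r * (u \<bullet> u)" by simp
    moreover have "0 \<le> r * (u \<bullet> u)" using r by simp
    ultimately show False using uAu by linarith
  qed
  ultimately have "r \<le> lambda_max A" by (rule eigenvalue_le_lambda_max[OF sym, rotated])
  with r show "0 < lambda_max A" by simp
  from \<open>r \<le> lambda_max A\<close> have "r * norm v \<le> lambda_max A * norm v"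
    by (rule mult_right_mono) simp
  with max[of v] show "norm (A *v v) \<le> lambda_max A * norm v" by (simp add: r_def)
qed

section \<open>Functions with Hoelder continuous gradient\<close>

lemma holder_smooth_upper_bound:
  fixes F :: "'a::real_inner \<Rightarrow> real" and F' :: "'a \<Rightarrow> 'a"
  assumes F_diff: "\<And>x. (F has_derivative (\<lambda>h. F' x \<bullet> h)) (at x)"
    and holder: "\<And>x y. norm (F' x - F' y) \<le> L * norm (x - y) powr \<alpha>"
    and "0 \<le> \<alpha>" "0 \<le> L"
  shows "F y \<le> F x + F' x \<bullet> (y - x) + L * norm (y - x) powr (1 + \<alpha>)"
proof -
  define d where "d = y - x"
  have "((\<lambda>t. F (x + t *\<^sub>R d)) has_real_derivative F' (x + t *\<^sub>R d) \<bullet> d) (at t)" for t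
  proof -
    have "((\<lambda>t::real. x + t *\<^sub>R d) has_derivative (\<lambda>h. h *\<^sub>R d)) (at t)"
      by (auto intro!: derivative_eq_intros)
    from has_derivative_compose[OF this F_diff] show ?thesis
      by (simp add: has_field_derivative_def mult_commute_abs)
  qed
  then obtain z where z: "0 < z" "z < 1" and "F y - F x = F' (x + z *\<^sub>R d) \<bullet> d"
    using MVT2[of 0 1 "\<lambda>t. F (x + t *\<^sub>R d)" "\<lambda>t. F' (x + t *\<^sub>R d) \<bullet> d"]
    by (auto simp: d_def)
  moreover have "(F' (x + z *\<^sub>R d) - F' x) \<bullet> d \<le> L * norm d powr (1 + \<alpha>)"
  proof -
    have "(F' (x + z *\<^sub>R d) - F' x) \<bullet> d \<le> norm (F' (x + z *\<^sub>R d) - F' x) * norm d"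
      by (rule norm_cauchy_schwarz)
    also have "\<dots> \<le> L * norm (z *\<^sub>R d) powr \<alpha> * norm d"
      using holder[of "x + z *\<^sub>R d" x] by (simp add: mult_right_mono)
    also have "\<dots> \<le> L * norm d powr \<alpha> * norm d"
      using z assms(3,4)
      by (intro mult_right_mono mult_left_mono powr_mono2) (auto simp: mult_left_le_one_le)
    finally show ?thesis by (simp add: powr_add ac_simps)
  qed
  ultimately show ?thesis by (simp add: d_def inner_diff_left)
qed

lemma holder_smooth_gradient_sq_le:
  fixes F :: "'a::real_inner \<Rightarrow> real" and F' :: "'a \<Rightarrow> 'a"
  assumes F_diff: "\<And>x. (F has_derivative (\<lambda>h. F' x \<bullet> h)) (at x)"
    and holder: "\<And>x y. norm (F' x - F' y) \<le> L * norm (x - y) powr \<alpha>"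
    and \<alpha>: "0 < \<alpha>" "\<alpha> \<le> 1" and L: "L > 0" and lb: "\<And>x. F x \<ge> Flb"
  shows "(norm (F' x))\<^sup>2 \<le> 1 + 2 * (2 * L) powr (1 / \<alpha>) * (F x - Flb)"
proof (cases "norm (F' x) \<le> 1")
  case True
  then have "(norm (F' x))\<^sup>2 \<le> 1" by (simp add: power_le_one)
  with lb[of x] show ?thesis by (simp add: add_increasing2)
next
  case False
  define g where "g = F' x"
  define d where "d = norm g"
  have d: "d > 1" using False by (simp add: d_def g_def)
  \<comment> \<open>The step size s balances the descent - s d^2 against the Hoelder remainder L (s d)^(1 + \<alpha>).\<close>
  define s where "s = (2 * L) powr (- 1 / \<alpha>)"
  have s: "s > 0" using L by (simp add: s_def)
  have "s powr \<alpha> = (2 * L) powr (- 1)" using \<alpha> L by (simp add: s_def powr_powr)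
  then have Ls: "L * s powr \<alpha> = 1 / 2" using L by (simp add: powr_minus_divide)
  have "norm (s *\<^sub>R g) powr (1 + \<alpha>) = s * s powr \<alpha> * d powr (1 + \<alpha>)"
    using s d by (simp add: d_def powr_mult powr_add)
  also have "\<dots> \<le> s * s powr \<alpha> * d powr 2"
    using s d \<alpha> by (intro mult_left_mono powr_mono) auto
  finally have "L * norm (s *\<^sub>R g) powr (1 + \<alpha>) \<le> L * (s * s powr \<alpha> * d\<^sup>2)"
    using L d by (simp add: powr_numeral)
  also have "\<dots> = s * d\<^sup>2 / 2" using Ls by (simp add: algebra_simps)
  finally have "L * norm (s *\<^sub>R g) powr (1 + \<alpha>) \<le> s * d\<^sup>2 / 2" .
  moreover have "Flb \<le> F x - s * d\<^sup>2 + L * norm (s *\<^sub>R g) powr (1 + \<alpha>)"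
    using lb[of "x - s *\<^sub>R g"] holder_smooth_upper_bound[OF F_diff holder, of "x - s *\<^sub>R g" x] \<alpha> L
    by (simp add: g_def d_def power2_norm_eq_inner)
  ultimately have "s * d\<^sup>2 \<le> 2 * (F x - Flb)" by argo
  then have "d\<^sup>2 \<le> 2 * (F x - Flb) / s" using s by (simp add: field_simps)
  also have "2 * (F x - Flb) / s = 2 * (2 * L) powr (1 / \<alpha>) * (F x - Flb)"
    using L by (simp add: s_def powr_minus_divide divide_simps powr_minus)
  finally show ?thesis by (simp add: d_def g_def)
qed

section \<open>Joint measurability of stochastic gradients\<close>

lemma floor_mult_div_tendsto:
  fixes t :: real
  shows "(\<lambda>m. real_of_int \<lfloor>real (Suc m) * t\<rfloor> / real (Suc m)) \<longlonglongrightarrow> t"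
proof (rule tendsto_sandwich[where f = "\<lambda>m. t - 1 / real (Suc m)" and h = "\<lambda>m. t"])
  have "(real (Suc m) * t - 1) / real (Suc m) \<le> real_of_int \<lfloor>real (Suc m) * t\<rfloor> / real (Suc m)" for m
    by (intro divide_right_mono) linarith+
  then show "\<forall>\<^sub>F m in sequentially. t - 1 / real (Suc m) \<le> real_of_int \<lfloor>real (Suc m) * t\<rfloor> / real (Suc m)"
    by (simp add: diff_divide_distrib)
  have "real_of_int \<lfloor>real (Suc m) * t\<rfloor> / real (Suc m) \<le> real (Suc m) * t / real (Suc m)" for m
    by (intro divide_right_mono) linarith+
  then show "\<forall>\<^sub>F m in sequentially. real_of_int \<lfloor>real (Suc m) * t\<rfloor> / real (Suc m) \<le> t"
    by simp
  show "(\<lambda>m. t - 1 / real (Suc m)) \<longlonglongrightarrow> t"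
    using tendsto_diff[OF tendsto_const LIMSEQ_inverse_real_of_nat, of t] by (simp add: inverse_eq_divide)
qed simp

lemma measurable_floor_scaled_vec:
  "(\<lambda>\<theta>::real^'n. \<chi> i. \<lfloor>c * (\<theta> $ i)\<rfloor>) \<in> measurable borel (count_space UNIV)"
proof (subst measurable_count_space_eq2_countable, safe)
  fix k :: "int^'n"
  have "(\<lambda>\<theta>::real^'n. c * (\<theta> $ i)) \<in> borel_measurable borel" for i
    by (intro borel_measurable_continuous_onI continuous_intros)
  then have "(\<lambda>\<theta>::real^'n. \<lfloor>c * (\<theta> $ i)\<rfloor>) \<in> measurable borel (count_space UNIV)" for i
    using measurable_compose[OF _ measurable_real_floor] by blast
  from measurable_sets[OF this, of "{k $ i}" for i]
  have "(\<Inter>i. (\<lambda>\<theta>::real^'n. \<lfloor>c * (\<theta> $ i)\<rfloor>) -` {k $ i}) \<in> sets borel"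
    by (intro sets.finite_INT) auto
  moreover have "(\<lambda>\<theta>::real^'n. \<chi> i. \<lfloor>c * (\<theta> $ i)\<rfloor>) -` {k} = (\<Inter>i. (\<lambda>\<theta>. \<lfloor>c * (\<theta> $ i)\<rfloor>) -` {k $ i})"
    by (auto simp: vec_eq_iff)
  ultimately show "(\<lambda>\<theta>::real^'n. \<chi> i. \<lfloor>c * (\<theta> $ i)\<rfloor>) -` {k} \<inter> space borel \<in> sets borel" by simp
qed simp

lemma borel_measurable_caratheodory:
  fixes f :: "real^'n \<Rightarrow> 'x \<Rightarrow> 'b::metric_space"
  assumes cont: "\<And>x. continuous_on UNIV (\<lambda>t. f t x)"
    and meas: "\<And>\<theta>. f \<theta> \<in> borel_measurable D"
  shows "(\<lambda>p. f (fst p) (snd p)) \<in> borel_measurable (borel \<Otimes>\<^sub>M D)"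
proof -
  \<comment> \<open>Evaluate at the grid point below the parameter and pass to the limit.\<close>
  define grid where "grid m (\<theta>::real^'n) = (\<chi> i. \<lfloor>real (Suc m) * (\<theta> $ i)\<rfloor>)" for m \<theta>
  define point where "point m (k::int^'n) = (\<chi> i. real_of_int (k $ i) / real (Suc m))" for m k
  have grid_meas: "grid m \<in> measurable borel (count_space UNIV)" for m
    unfolding grid_def by (rule measurable_floor_scaled_vec)
  show ?thesis
  proof (rule borel_measurable_LIMSEQ_metric)
    fix m
    have "(\<lambda>p. grid m (fst p)) \<in> measurable (borel \<Otimes>\<^sub>M D) (count_space UNIV)"
      using measurable_compose[OF measurable_fst grid_meas[of m], of D] by (simp add: comp_def)
    then have "(\<lambda>p. (\<lambda>k p. f (point m k) (snd p)) (grid m (fst p)) p) \<in> borel_measurable (borel \<Otimes>\<^sub>M D)"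
      by (rule measurable_compose_countable[rotated]) (rule measurable_compose[OF measurable_snd meas])
    then show "(\<lambda>p. f (point m (grid m (fst p))) (snd p)) \<in> borel_measurable (borel \<Otimes>\<^sub>M D)"
      by simp
  next
    fix p :: "(real^'n) \<times> 'x"
    have "(\<lambda>m. point m (grid m (fst p))) \<longlonglongrightarrow> fst p"
      by (rule vec_tendstoI) (simp only: point_def grid_def vec_lambda_beta floor_mult_div_tendsto)
    moreover have "isCont (\<lambda>t. f t (snd p)) (fst p)"
      using cont[of "snd p"] by (simp add: continuous_on_eq_continuous_at)
    ultimately show "(\<lambda>m. f (point m (grid m (fst p))) (snd p)) \<longlonglongrightarrow> f (fst p) (snd p)"
      using isCont_tendsto_compose by blast
  qed
qed

lemma difference_quotient_seq_tendsto:
  assumes "(\<phi> has_real_derivative D) (at 0)"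
  shows "(\<lambda>m. (\<phi> (1 / real (Suc m)) - \<phi> 0) * real (Suc m)) \<longlonglongrightarrow> D"
proof -
  from assms have "((\<lambda>h. (\<phi> h - \<phi> 0) / h) \<longlongrightarrow> D) (at 0)" by (simp add: DERIV_def)
  moreover have "filterlim (\<lambda>m. 1 / real (Suc m)) (at 0) sequentially"
    using LIMSEQ_inverse_real_of_nat by (simp add: filterlim_at inverse_eq_divide)
  ultimately show ?thesis using filterlim_compose by (fastforce simp: comp_def)
qed

lemma borel_measurable_gradient_pair:
  fixes f :: "real^'n \<Rightarrow> 'x \<Rightarrow> real" and f' :: "real^'n \<Rightarrow> 'x \<Rightarrow> real^'n"
  assumes f_diff: "\<And>\<theta> x. ((\<lambda>t. f t x) has_derivative (\<lambda>h. f' \<theta> x \<bullet> h)) (at \<theta>)"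
    and meas: "\<And>\<theta>. f \<theta> \<in> borel_measurable D"
  shows "(\<lambda>p. f' (fst p) (snd p)) \<in> borel_measurable (borel \<Otimes>\<^sub>M D)"
proof -
  have "continuous_on UNIV (\<lambda>t. f t x)" for x
    by (intro continuous_at_imp_continuous_on ballI has_derivative_continuous[OF f_diff])
  then have f_pair: "(\<lambda>p. f (fst p) (snd p)) \<in> borel_measurable (borel \<Otimes>\<^sub>M D)"
    using meas by (rule borel_measurable_caratheodory)
  show ?thesis
  proof (subst borel_measurable_euclidean_space, intro ballI)
    fix e :: "real^'n"
    show "(\<lambda>p. f' (fst p) (snd p) \<bullet> e) \<in> borel_measurable (borel \<Otimes>\<^sub>M D)"
    proof (rule borel_measurable_LIMSEQ_metric)
      fix m :: nat
      have "(\<lambda>p. (fst p + (1 / real (Suc m)) *\<^sub>R e, snd p)) \<in> measurable (borel \<Otimes>\<^sub>M D) (borel \<Otimes>\<^sub>M D)"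
        by measurable
      from measurable_compose[OF this f_pair]
      have "(\<lambda>p. f (fst p + (1 / real (Suc m)) *\<^sub>R e) (snd p)) \<in> borel_measurable (borel \<Otimes>\<^sub>M D)"
        by simp
      with f_pair show "(\<lambda>p. (f (fst p + (1 / real (Suc m)) *\<^sub>R e) (snd p) - f (fst p) (snd p)) * real (Suc m))
          \<in> borel_measurable (borel \<Otimes>\<^sub>M D)"
        by measurable
    next
      fix p :: "(real^'n) \<times> 'x"
      have "((\<lambda>h::real. fst p + h *\<^sub>R e) has_derivative (\<lambda>h. h *\<^sub>R e)) (at 0)"
        by (auto intro!: derivative_eq_intros)
      from has_derivative_compose[OF this f_diff]
      have "((\<lambda>h. f (fst p + h *\<^sub>R e) (snd p)) has_real_derivative f' (fst p) (snd p) \<bullet> e) (at 0)"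
        by (simp add: has_field_derivative_def mult_commute_abs)
      from difference_quotient_seq_tendsto[OF this]
      show "(\<lambda>m. (f (fst p + (1 / real (Suc m)) *\<^sub>R e) (snd p) - f (fst p) (snd p)) * real (Suc m))
          \<longlonglongrightarrow> f' (fst p) (snd p) \<bullet> e"
        by simp
    qed
  qed
qed

section \<open>Convergence in mean of fractional powers\<close>

lemma
  fixes f :: "'a \<Rightarrow> real"
  assumes "f \<in> borel_measurable M" "AE x in M. 0 \<le> f x" "0 \<le> B"
    and "(\<integral>\<^sup>+x. ennreal (f x) \<partial>M) \<le> ennreal B"
  shows integrable_if_nn_integral_le: "integrable M f"
    and integral_le_if_nn_integral_le: "integral\<^sup>L M f \<le> B"
proof -
  show int: "integrable M f"
    using assms by (intro integrableI_nonneg) (auto simp: le_less_trans)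
  have "ennreal (integral\<^sup>L M f) = (\<integral>\<^sup>+x. ennreal (f x) \<partial>M)"
    using int assms(2) by (rule nn_integral_eq_integral[symmetric])
  with assms(4) have "ennreal (integral\<^sup>L M f) \<le> ennreal B" by simp
  with assms(3) show "integral\<^sup>L M f \<le> B" by (simp add: ennreal_le_iff)
qed

lemma nn_integral_le_if_AE_tendsto:
  fixes G :: "nat \<Rightarrow> 'a \<Rightarrow> real"
  assumes "\<And>k. G k \<in> borel_measurable M"
    and lim: "AE \<omega> in M. (\<lambda>k. G k \<omega>) \<longlonglongrightarrow> Z \<omega>"
    and bound: "\<And>k. (\<integral>\<^sup>+\<omega>. ennreal (G k \<omega>) \<partial>M) \<le> B"
  shows "(\<integral>\<^sup>+\<omega>. ennreal (Z \<omega>) \<partial>M) \<le> B"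
proof -
  have "AE \<omega> in M. ennreal (Z \<omega>) = liminf (\<lambda>k. ennreal (G k \<omega>))"
    using lim
  proof eventually_elim
    case (elim \<omega>)
    then have "(\<lambda>k. ennreal (G k \<omega>)) \<longlonglongrightarrow> ennreal (Z \<omega>)" by (rule tendsto_ennrealI)
    then show ?case by (intro lim_imp_Liminf[symmetric]) auto
  qed
  then have "(\<integral>\<^sup>+\<omega>. ennreal (Z \<omega>) \<partial>M) = (\<integral>\<^sup>+\<omega>. liminf (\<lambda>k. ennreal (G k \<omega>)) \<partial>M)"
    by (rule nn_integral_cong_AE)
  also have "\<dots> \<le> liminf (\<lambda>k. \<integral>\<^sup>+\<omega>. ennreal (G k \<omega>) \<partial>M)"
    using assms(1) by (intro nn_integral_liminf) simp
  also have "\<dots> \<le> B"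
    using bound by (intro Liminf_le) simp_all
  finally show ?thesis .
qed

lemma powr_minus_min_le:
  fixes x T \<gamma> :: real
  assumes x: "x \<ge> 0" and T: "T > 0" and \<gamma>: "0 < \<gamma>" "\<gamma> < 1"
  shows "x powr \<gamma> - min (x powr \<gamma>) T \<le> T powr (1 - 1 / \<gamma>) * x"
proof (cases "x powr \<gamma> \<le> T")
  case False
  define y where "y = x powr \<gamma>"
  have y: "y > T" and "x > 0" using False x T by (auto simp: y_def intro: ccontr)
  then have x_eq: "x = y powr (1 / \<gamma>)" using \<gamma> by (simp add: y_def powr_powr)
  have "y powr (1 - 1 / \<gamma>) \<le> T powr (1 - 1 / \<gamma>)"
    using \<gamma> T y by (intro powr_mono2') (auto simp: field_simps)
  then have "y powr (1 - 1 / \<gamma>) * x \<le> T powr (1 - 1 / \<gamma>) * x" using x by (rule mult_right_mono)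
  moreover have "y powr (1 - 1 / \<gamma>) * x = y" using y T by (simp add: x_eq powr_add[symmetric])
  ultimately show ?thesis using y T by (simp add: y_def)
qed (use x in simp)

lemma abs_powr_diff_le_truncated:
  fixes x y T \<gamma> :: real
  assumes "x \<ge> 0" "y \<ge> 0" "T > 0" "0 < \<gamma>" "\<gamma> < 1"
  shows "\<bar>x powr \<gamma> - y powr \<gamma>\<bar>
    \<le> \<bar>min (x powr \<gamma>) T - min (y powr \<gamma>) T\<bar> + T powr (1 - 1 / \<gamma>) * (x + y)"
proof -
  have "0 \<le> T powr (1 - 1 / \<gamma>) * x" "0 \<le> T powr (1 - 1 / \<gamma>) * y" using assms by simp_all
  with powr_minus_min_le[of x T \<gamma>] powr_minus_min_le[of y T \<gamma>] assms show ?thesis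
    by (auto simp: min_def distrib_left split: if_splits abs_split; argo)
qed

lemma tendsto_integral_truncated_powr_diff:
  fixes G :: "nat \<Rightarrow> 'a \<Rightarrow> real"
  assumes "finite_measure M"
    and [measurable]: "\<And>k. G k \<in> borel_measurable M" "Z \<in> borel_measurable M"
    and lim: "AE \<omega> in M. (\<lambda>k. G k \<omega>) \<longlonglongrightarrow> Z \<omega>"
    and G: "\<And>k \<omega>. G k \<omega> \<ge> 0" and Z: "AE \<omega> in M. Z \<omega> \<ge> 0" and "0 < \<gamma>" and "T > 0"
  shows "(\<lambda>k. \<integral>\<omega>. \<bar>min (G k \<omega> powr \<gamma>) T - min (Z \<omega> powr \<gamma>) T\<bar> \<partial>M) \<longlonglongrightarrow> 0"
proof -
  interpret finite_measure M by fact
  have "(\<lambda>k. \<integral>\<omega>. \<bar>min (G k \<omega> powr \<gamma>) T - min (Z \<omega> powr \<gamma>) T\<bar> \<partial>M) \<longlonglongrightarrow> (\<integral>\<omega>. 0 \<partial>M)"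
  proof (rule integral_dominated_convergence[where w = "\<lambda>_. T"])
    show "AE \<omega> in M. (\<lambda>k. \<bar>min (G k \<omega> powr \<gamma>) T - min (Z \<omega> powr \<gamma>) T\<bar>) \<longlonglongrightarrow> 0"
      using lim Z
    proof eventually_elim
      fix \<omega> assume "(\<lambda>k. G k \<omega>) \<longlonglongrightarrow> Z \<omega>" "0 \<le> Z \<omega>"
      with G \<open>0 < \<gamma>\<close> have "(\<lambda>k. G k \<omega> powr \<gamma>) \<longlonglongrightarrow> Z \<omega> powr \<gamma>"
        by (intro tendsto_powr') auto
      then have "(\<lambda>k. min (G k \<omega> powr \<gamma>) T) \<longlonglongrightarrow> min (Z \<omega> powr \<gamma>) T"
        by (rule tendsto_min[OF _ tendsto_const])
      from tendsto_rabs[OF tendsto_diff[OF this tendsto_const, of "min (Z \<omega> powr \<gamma>) T"]]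
      show "(\<lambda>k. \<bar>min (G k \<omega> powr \<gamma>) T - min (Z \<omega> powr \<gamma>) T\<bar>) \<longlonglongrightarrow> 0" by simp
    qed
    have "\<bar>min a T - min b T\<bar> \<le> T" if "0 \<le> a" "0 \<le> b" for a b :: real
      using that \<open>T > 0\<close> by (auto simp: min_def abs_le_iff)
    then show "AE \<omega> in M. norm (\<bar>min (G k \<omega> powr \<gamma>) T - min (Z \<omega> powr \<gamma>) T\<bar>) \<le> T" for k
      by (intro AE_I2) simp
  qed auto
  then show ?thesis by simp
qed

lemma integrable_powr_le_one:
  fixes f :: "'a \<Rightarrow> real"
  assumes "finite_measure M" and f: "integrable M f" "AE x in M. 0 \<le> f x"
    and \<gamma>: "0 \<le> \<gamma>" "\<gamma> \<le> 1"
  shows "integrable M (\<lambda>x. f x powr \<gamma>)"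
proof (rule Bochner_Integration.integrable_bound[where f = "\<lambda>x. 1 + f x"])
  interpret finite_measure M by fact
  have powr_le: "y powr \<gamma> \<le> 1 + y" if "0 \<le> y" for y :: real
  proof (cases "y \<le> 1")
    case True
    then have "y powr \<gamma> \<le> 1 powr \<gamma>" using that \<gamma> by (intro powr_mono2) auto
    then show ?thesis using that by simp
  next
    case False
    then have "y powr \<gamma> \<le> y powr 1" using \<gamma> by (intro powr_mono) auto
    then show ?thesis using False by simp
  qed
  show "AE x in M. norm (f x powr \<gamma>) \<le> norm (1 + f x)"
    using f(2) by eventually_elim (use powr_le in auto)
  show "integrable M (\<lambda>x. 1 + f x)" using f(1) by simp
  show "(\<lambda>x. f x powr \<gamma>) \<in> borel_measurable M" using borel_measurable_integrable[OF f(1)] by measurable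
qed

lemma integral_abs_powr_diff_le_truncated:
  fixes f g :: "'a \<Rightarrow> real"
  assumes "finite_measure M" and f: "integrable M f" "AE x in M. 0 \<le> f x"
    and g: "integrable M g" "AE x in M. 0 \<le> g x" and T: "T > 0" and \<gamma>: "0 < \<gamma>" "\<gamma> < 1"
  shows "(\<integral>x. \<bar>f x powr \<gamma> - g x powr \<gamma>\<bar> \<partial>M)
    \<le> (\<integral>x. \<bar>min (f x powr \<gamma>) T - min (g x powr \<gamma>) T\<bar> \<partial>M)
      + T powr (1 - 1 / \<gamma>) * ((\<integral>x. f x \<partial>M) + (\<integral>x. g x \<partial>M))"
proof -
  interpret finite_measure M by fact
  have powr_int: "integrable M (\<lambda>x. f x powr \<gamma>)" "integrable M (\<lambda>x. g x powr \<gamma>)"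
    using integrable_powr_le_one[OF \<open>finite_measure M\<close>] f g \<gamma> by auto
  have trunc_int: "integrable M (\<lambda>x. \<bar>min (f x powr \<gamma>) T - min (g x powr \<gamma>) T\<bar>)"
  proof (rule Bochner_Integration.integrable_bound[where f = "\<lambda>_. T"])
    have "\<bar>min a T - min b T\<bar> \<le> T" if "0 \<le> a" "0 \<le> b" for a b :: real
      using that T by (auto simp: min_def abs_le_iff)
    then show "AE x in M. norm (\<bar>min (f x powr \<gamma>) T - min (g x powr \<gamma>) T\<bar>) \<le> norm T"
      using T by (intro AE_I2) simp
    show "(\<lambda>x. \<bar>min (f x powr \<gamma>) T - min (g x powr \<gamma>) T\<bar>) \<in> borel_measurable M"
      using borel_measurable_integrable[OF f(1)] borel_measurable_integrable[OF g(1)] by measurable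
  qed simp
  have "AE x in M. \<bar>f x powr \<gamma> - g x powr \<gamma>\<bar>
      \<le> \<bar>min (f x powr \<gamma>) T - min (g x powr \<gamma>) T\<bar> + T powr (1 - 1 / \<gamma>) * (f x + g x)"
    using f(2) g(2) by eventually_elim (simp add: abs_powr_diff_le_truncated T \<gamma>)
  then have "(\<integral>x. \<bar>f x powr \<gamma> - g x powr \<gamma>\<bar> \<partial>M)
      \<le> (\<integral>x. \<bar>min (f x powr \<gamma>) T - min (g x powr \<gamma>) T\<bar> + T powr (1 - 1 / \<gamma>) * (f x + g x) \<partial>M)"
    using powr_int trunc_int f(1) g(1) by (intro integral_mono_AE) auto
  also have "\<dots> = (\<integral>x. \<bar>min (f x powr \<gamma>) T - min (g x powr \<gamma>) T\<bar> \<partial>M)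
      + T powr (1 - 1 / \<gamma>) * ((\<integral>x. f x \<partial>M) + (\<integral>x. g x \<partial>M))"
    using trunc_int f(1) g(1) by simp
  finally show ?thesis .
qed

lemma tendsto_integral_abs_powr_diff:
  fixes G :: "nat \<Rightarrow> 'a \<Rightarrow> real"
  assumes "finite_measure M"
    and [measurable]: "\<And>k. G k \<in> borel_measurable M" "Z \<in> borel_measurable M"
    and G: "\<And>k \<omega>. G k \<omega> \<ge> 0" "\<And>k. integrable M (G k)" "\<And>k. (\<integral>\<omega>. G k \<omega> \<partial>M) \<le> B"
    and Z: "AE \<omega> in M. Z \<omega> \<ge> 0" "integrable M Z" "(\<integral>\<omega>. Z \<omega> \<partial>M) \<le> B"
    and lim: "AE \<omega> in M. (\<lambda>k. G k \<omega>) \<longlonglongrightarrow> Z \<omega>"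
    and \<gamma>: "0 < \<gamma>" "\<gamma> < 1"
  shows "(\<lambda>k. \<integral>\<omega>. \<bar>G k \<omega> powr \<gamma> - Z \<omega> powr \<gamma>\<bar> \<partial>M) \<longlonglongrightarrow> 0"
proof (rule order_tendstoI)
  fix e :: real assume "e < 0"
  then show "\<forall>\<^sub>F k in sequentially. e < (\<integral>\<omega>. \<bar>G k \<omega> powr \<gamma> - Z \<omega> powr \<gamma>\<bar> \<partial>M)"
    by (simp add: less_le_trans)
next
  fix e :: real assume e: "0 < e"
  have "0 \<le> (\<integral>\<omega>. G 0 \<omega> \<partial>M)" using G(1) by (simp add: Bochner_Integration.integral_nonneg)
  with G(3)[of 0] have B: "0 \<le> B" by linarith
  define s where "s = 1 - 1 / \<gamma>"
  have "s < 0" using \<gamma> by (simp add: s_def field_simps)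
  then have "((\<lambda>T::real. T powr s) \<longlongrightarrow> 0) at_top" by (intro tendsto_neg_powr filterlim_ident)
  then have "\<forall>\<^sub>F T in at_top. T powr s < e / (4 * B + 1) \<and> T > 0"
    using e B by (intro eventually_conj order_tendstoD eventually_gt_at_top) auto
  then obtain T where T: "T > 0" and Ts: "T powr s < e / (4 * B + 1)"
    by (auto simp: eventually_at_top_linorder)
  have "T powr s * (2 * B) \<le> e / (4 * B + 1) * (2 * B)" using Ts B by (intro mult_right_mono) auto
  also have "\<dots> \<le> e / 2" using e B by (simp add: field_simps)
  finally have TsB: "T powr s * (2 * B) \<le> e / 2" .
  define u where "u k = (\<integral>\<omega>. \<bar>min (G k \<omega> powr \<gamma>) T - min (Z \<omega> powr \<gamma>) T\<bar> \<partial>M)" for k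
  have "u \<longlonglongrightarrow> 0"
    unfolding u_def[abs_def] using tendsto_integral_truncated_powr_diff[OF assms(1-3) lim G(1) Z(1) \<gamma>(1) T] .
  with e have "\<forall>\<^sub>F k in sequentially. u k < e / 2" by (intro order_tendstoD) auto
  then show "\<forall>\<^sub>F k in sequentially. (\<integral>\<omega>. \<bar>G k \<omega> powr \<gamma> - Z \<omega> powr \<gamma>\<bar> \<partial>M) < e"
  proof eventually_elim
    case (elim k)
    have "(\<integral>\<omega>. \<bar>G k \<omega> powr \<gamma> - Z \<omega> powr \<gamma>\<bar> \<partial>M)
        \<le> u k + T powr s * ((\<integral>\<omega>. G k \<omega> \<partial>M) + (\<integral>\<omega>. Z \<omega> \<partial>M))"
      unfolding u_def s_def using G Z T \<gamma>
      by (intro integral_abs_powr_diff_le_truncated assms(1)) auto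
    also have "\<dots> \<le> u k + T powr s * (2 * B)"
      using G(3)[of k] Z(3) by (intro add_left_mono mult_left_mono) auto
    finally show ?case using elim TsB by linarith
  qed
qed

lemma tendsto_nn_integral_powr_diff:
  fixes G :: "nat \<Rightarrow> 'a \<Rightarrow> real"
  assumes "prob_space M"
    and [measurable]: "\<And>k. G k \<in> borel_measurable M" "Z \<in> borel_measurable M"
    and G: "\<And>k \<omega>. G k \<omega> \<ge> 0"
    and lim: "AE \<omega> in M. (\<lambda>k. G k \<omega>) \<longlonglongrightarrow> Z \<omega>"
    and bound: "\<And>k. (\<integral>\<^sup>+\<omega>. ennreal (G k \<omega>) \<partial>M) \<le> ennreal B" and B: "0 \<le> B"
    and \<gamma>: "0 < \<gamma>" "\<gamma> < 1"
  shows "(\<lambda>k. \<integral>\<^sup>+\<omega>. ennreal \<bar>G k \<omega> powr \<gamma> - Z \<omega> powr \<gamma>\<bar> \<partial>M) \<longlonglongrightarrow> 0"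
proof -
  interpret prob_space M by fact
  have Z: "AE \<omega> in M. Z \<omega> \<ge> 0"
    using lim by eventually_elim (auto intro: LIMSEQ_le_const G)
  have G_int: "integrable M (G k)" and G_le: "(\<integral>\<omega>. G k \<omega> \<partial>M) \<le> B" for k
    using integrable_if_nn_integral_le[OF _ _ B bound] integral_le_if_nn_integral_le[OF _ _ B bound] G
    by auto
  have Z_nn: "(\<integral>\<^sup>+\<omega>. ennreal (Z \<omega>) \<partial>M) \<le> ennreal B"
    by (rule nn_integral_le_if_AE_tendsto[OF _ lim bound]) simp
  have Z_int: "integrable M Z" and Z_le: "(\<integral>\<omega>. Z \<omega> \<partial>M) \<le> B"
    using integrable_if_nn_integral_le[OF _ Z B Z_nn] integral_le_if_nn_integral_le[OF _ Z B Z_nn]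
    by auto
  have "(\<lambda>k. ennreal (\<integral>\<omega>. \<bar>G k \<omega> powr \<gamma> - Z \<omega> powr \<gamma>\<bar> \<partial>M)) \<longlonglongrightarrow> ennreal 0"
    using tendsto_integral_abs_powr_diff[OF finite_measure_axioms assms(2,3) G G_int G_le Z Z_int Z_le lim \<gamma>]
    by (rule tendsto_ennrealI)
  moreover have "(\<integral>\<^sup>+\<omega>. ennreal \<bar>G k \<omega> powr \<gamma> - Z \<omega> powr \<gamma>\<bar> \<partial>M)
      = ennreal (\<integral>\<omega>. \<bar>G k \<omega> powr \<gamma> - Z \<omega> powr \<gamma>\<bar> \<partial>M)" for k
    using G_int Z_int G Z \<gamma>
    by (intro nn_integral_eq_integral integrable_abs Bochner_Integration.integrable_diff
        integrable_powr_le_one finite_measure_axioms) auto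
  ultimately show ?thesis by simp
qed

section \<open>One step of SGD in expectation\<close>

lemma powr_one_plus_le_one_plus_sq:
  fixes t a :: real
  assumes "0 \<le> t" "0 \<le> a" "a \<le> 1"
  shows "t powr (1 + a) \<le> 1 + t\<^sup>2"
proof (cases "t \<le> 1")
  case True
  then have "t powr (1 + a) \<le> 1 powr (1 + a)" using assms by (intro powr_mono2) auto
  then show ?thesis by (intro add_increasing2) simp_all
next
  case False
  then have "t powr (1 + a) \<le> t powr 2" using assms by (intro powr_mono) auto
  with False show ?thesis by (simp add: powr_numeral)
qed

lemma sgd_step_descent_bound:
  fixes F :: "real^'n \<Rightarrow> real" and Fdot :: "real^'n \<Rightarrow> real^'n" and A :: "real^'n^'n"
  assumes F_diff: "\<And>\<theta>. (F has_derivative (\<lambda>h. Fdot \<theta> \<bullet> h)) (at \<theta>)"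
    and holder: "\<And>\<phi>1 \<phi>2. norm (Fdot \<phi>1 - Fdot \<phi>2) \<le> L * norm (\<phi>1 - \<phi>2) powr \<alpha>"
    and sym: "transpose A = A" and pd: "\<And>v. v \<noteq> 0 \<Longrightarrow> v \<bullet> (A *v v) > 0"
    and \<alpha>: "0 < \<alpha>" "\<alpha> \<le> 1" and L: "L > 0"
  shows "F (\<theta> - A *v g)
    \<le> F \<theta> - (A *v Fdot \<theta>) \<bullet> g + L * lambda_max A powr (1 + \<alpha>) * (1 + (norm g)\<^sup>2)"
proof -
  have "norm (A *v g) powr (1 + \<alpha>) \<le> (lambda_max A * norm g) powr (1 + \<alpha>)"
    using norm_matrix_vector_le_lambda_max[OF sym pd] \<alpha> by (intro powr_mono2) auto
  also have "\<dots> = lambda_max A powr (1 + \<alpha>) * norm g powr (1 + \<alpha>)"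
    using lambda_max_pos[OF sym pd] by (simp add: powr_mult)
  also have "\<dots> \<le> lambda_max A powr (1 + \<alpha>) * (1 + (norm g)\<^sup>2)"
    using powr_one_plus_le_one_plus_sq \<alpha> by (intro mult_left_mono) auto
  finally have "L * norm (A *v g) powr (1 + \<alpha>) \<le> L * lambda_max A powr (1 + \<alpha>) * (1 + (norm g)\<^sup>2)"
    using L by (simp add: mult.assoc mult_left_mono)
  moreover have "F (\<theta> - A *v g) \<le> F \<theta> - (A *v Fdot \<theta>) \<bullet> g + L * norm (A *v g) powr (1 + \<alpha>)"
    using holder_smooth_upper_bound[OF F_diff holder, of "\<theta> - A *v g" \<theta>] \<alpha> L
      matrix_vector_mult_inner_symmetric[OF sym, of "Fdot \<theta>" g]
    by (simp add: inner_commute)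
  ultimately show ?thesis by argo
qed

lemma nn_integral_sgd_step_le:
  fixes D :: "'x measure" and F :: "real^'n \<Rightarrow> real" and Fdot :: "real^'n \<Rightarrow> real^'n"
    and g :: "'x \<Rightarrow> real^'n" and A :: "real^'n^'n"
  assumes D: "prob_space D"
    and F_diff: "\<And>\<theta>. (F has_derivative (\<lambda>h. Fdot \<theta> \<bullet> h)) (at \<theta>)"
    and holder: "\<And>\<phi>1 \<phi>2. norm (Fdot \<phi>1 - Fdot \<phi>2) \<le> L * norm (\<phi>1 - \<phi>2) powr \<alpha>"
    and sym: "transpose A = A" and pd: "\<And>v. v \<noteq> 0 \<Longrightarrow> v \<bullet> (A *v v) > 0"
    and \<alpha>: "0 < \<alpha>" "\<alpha> \<le> 1" and L: "L > 0" and lb: "\<And>\<theta>. F \<theta> \<ge> Flb"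
    and mean: "has_bochner_integral D g (Fdot \<theta>)"
    and sq_int: "integrable D (\<lambda>x. (norm (g x))\<^sup>2)"
  shows "(\<integral>\<^sup>+x. ennreal (F (\<theta> - A *v g x) - Flb) \<partial>D)
    \<le> ennreal (F \<theta> - Flb + L * lambda_max A powr (1 + \<alpha>) * (1 + (\<integral>x. (norm (g x))\<^sup>2 \<partial>D)))"
proof -
  interpret D: prob_space D by (rule D)
  define cL where "cL = L * lambda_max A powr (1 + \<alpha>)"
  define R where "R x = F \<theta> - Flb - (A *v Fdot \<theta>) \<bullet> g x + cL * (1 + (norm (g x))\<^sup>2)" for x
  have g_int: "integrable D g" using mean by (rule integrable.intros)
  have R_int: "integrable D R" unfolding R_def using g_int sq_int by auto
  have pointwise: "F (\<theta> - A *v g x) - Flb \<le> R x" for x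
    using sgd_step_descent_bound[OF F_diff holder sym pd \<alpha> L, of \<theta> "g x"] by (simp add: R_def cL_def)
  have "(\<integral>\<^sup>+x. ennreal (F (\<theta> - A *v g x) - Flb) \<partial>D) \<le> (\<integral>\<^sup>+x. ennreal (R x) \<partial>D)"
    using pointwise by (intro nn_integral_mono ennreal_leI)
  also have "\<dots> = ennreal (\<integral>x. R x \<partial>D)"
  proof (intro nn_integral_eq_integral AE_I2 R_int)
    show "0 \<le> R x" for x using pointwise[of x] lb[of "\<theta> - A *v g x"] by simp
  qed
  also have "(\<integral>x. R x \<partial>D) = F \<theta> - Flb - (A *v Fdot \<theta>) \<bullet> Fdot \<theta> + cL * (1 + (\<integral>x. (norm (g x))\<^sup>2 \<partial>D))"
    unfolding R_def using g_int sq_int has_bochner_integral_integral_eq[OF mean]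
    by (simp add: D.prob_space)
  also have "\<dots> \<le> F \<theta> - Flb + cL * (1 + (\<integral>x. (norm (g x))\<^sup>2 \<partial>D))"
    using pd[of "Fdot \<theta>"] by (cases "Fdot \<theta> = 0") (auto simp: inner_commute)
  finally show ?thesis by (simp add: cL_def ennreal_leI)
qed

lemma second_moment_le_suboptimality:
  fixes D :: "'x measure" and F :: "real^'n \<Rightarrow> real" and Fdot :: "real^'n \<Rightarrow> real^'n"
    and g :: "'x \<Rightarrow> real^'n"
  assumes F_diff: "\<And>\<theta>. (F has_derivative (\<lambda>h. Fdot \<theta> \<bullet> h)) (at \<theta>)"
    and holder: "\<And>\<phi>1 \<phi>2. norm (Fdot \<phi>1 - Fdot \<phi>2) \<le> L * norm (\<phi>1 - \<phi>2) powr \<alpha>"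
    and \<alpha>: "0 < \<alpha>" "\<alpha> \<le> 1" and L: "L > 0" and lb: "\<And>\<theta>. F \<theta> \<ge> Flb"
    and C: "C1 \<ge> 0" "C2 \<ge> 0" "C3 \<ge> 0"
    and g_meas: "g \<in> borel_measurable D"
    and second_moment: "(\<integral>\<^sup>+x. ennreal ((norm (g x))\<^sup>2) \<partial>D)
                 \<le> ennreal (C1 + C2 * (F \<theta> - Flb) + C3 * (norm (Fdot \<theta>))\<^sup>2)"
  defines "V \<equiv> C1 + C2 * (F \<theta> - Flb) + C3 * (1 + 2 * (2 * L) powr (1 / \<alpha>) * (F \<theta> - Flb))"
  shows "integrable D (\<lambda>x. (norm (g x))\<^sup>2)" and "(\<integral>x. (norm (g x))\<^sup>2 \<partial>D) \<le> V"
proof -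
  have V: "V \<ge> 0" using C lb[of \<theta>] by (simp add: V_def)
  have "(norm (Fdot \<theta>))\<^sup>2 \<le> 1 + 2 * (2 * L) powr (1 / \<alpha>) * (F \<theta> - Flb)"
    by (rule holder_smooth_gradient_sq_le[OF F_diff holder \<alpha> L lb])
  then have "C1 + C2 * (F \<theta> - Flb) + C3 * (norm (Fdot \<theta>))\<^sup>2 \<le> V"
    using C by (simp add: V_def mult_left_mono)
  with second_moment have sq_nn: "(\<integral>\<^sup>+x. ennreal ((norm (g x))\<^sup>2) \<partial>D) \<le> ennreal V"
    using ennreal_leI order_trans by blast
  have sq_meas: "(\<lambda>x. (norm (g x))\<^sup>2) \<in> borel_measurable D" using g_meas by measurable
  show "integrable D (\<lambda>x. (norm (g x))\<^sup>2)"
    using integrable_if_nn_integral_le[OF sq_meas _ V sq_nn] by simp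
  show "(\<integral>x. (norm (g x))\<^sup>2 \<partial>D) \<le> V"
    using integral_le_if_nn_integral_le[OF sq_meas _ V sq_nn] by simp
qed

lemma sgd_step_expectation_bound:
  fixes D :: "'x measure" and F :: "real^'n \<Rightarrow> real" and Fdot :: "real^'n \<Rightarrow> real^'n"
    and fdot :: "real^'n \<Rightarrow> 'x \<Rightarrow> real^'n" and A :: "real^'n^'n"
  assumes D: "prob_space D"
    and fdot_meas: "\<And>\<theta>. fdot \<theta> \<in> borel_measurable D"
    and F_diff: "\<And>\<theta>. (F has_derivative (\<lambda>h. Fdot \<theta> \<bullet> h)) (at \<theta>)"
    and sym: "transpose A = A" and pd: "\<And>v. v \<noteq> 0 \<Longrightarrow> v \<bullet> (A *v v) > 0"
    and \<alpha>: "0 < \<alpha>" "\<alpha> \<le> 1"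
    and lb: "\<And>\<theta>. F \<theta> \<ge> Flb"
    and unbiased: "\<And>\<theta>. has_bochner_integral D (fdot \<theta>) (Fdot \<theta>)"
    and C: "C1 \<ge> 0" "C2 \<ge> 0" "C3 \<ge> 0"
    and second_moment: "\<And>\<theta>. (\<integral>\<^sup>+x. ennreal ((norm (fdot \<theta> x))\<^sup>2) \<partial>D)
                 \<le> ennreal (C1 + C2 * (F \<theta> - Flb) + C3 * (norm (Fdot \<theta>))\<^sup>2)"
    and L: "L > 0"
    and holder: "\<And>\<phi>1 \<phi>2. norm (Fdot \<phi>1 - Fdot \<phi>2) \<le> L * norm (\<phi>1 - \<phi>2) powr \<alpha>"
  defines "c \<equiv> L * (1 + C1 + C2 + C3 + C3 * (2 * (2 * L) powr (1 / \<alpha>))) * lambda_max A powr (1 + \<alpha>)"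
  shows "(\<integral>\<^sup>+x. ennreal (F (\<theta> - A *v fdot \<theta> x) - Flb) \<partial>D) \<le> ennreal ((1 + c) * (F \<theta> - Flb) + c)"
proof -
  define G where "G = F \<theta> - Flb"
  define K where "K = 2 * (2 * L) powr (1 / \<alpha>)"
  define cL where "cL = L * lambda_max A powr (1 + \<alpha>)"
  define V where "V = C1 + C2 * G + C3 * (1 + K * G)"
  note moment = second_moment_le_suboptimality[OF F_diff holder \<alpha> L lb C fdot_meas second_moment]
  have "(\<integral>\<^sup>+x. ennreal (F (\<theta> - A *v fdot \<theta> x) - Flb) \<partial>D)
      \<le> ennreal (G + cL * (1 + (\<integral>x. (norm (fdot \<theta> x))\<^sup>2 \<partial>D)))"
    using nn_integral_sgd_step_le[OF D F_diff holder sym pd \<alpha> L lb unbiased moment(1)]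
    by (simp add: G_def cL_def)
  also have "\<dots> \<le> ennreal (G + cL * (1 + V))"
    using moment(2) L by (intro ennreal_leI add_left_mono mult_left_mono) (auto simp: cL_def V_def G_def K_def)
  also have "\<dots> \<le> ennreal ((1 + c) * G + c)"
  proof (rule ennreal_leI)
    have "G \<ge> 0" "K \<ge> 0" "cL \<ge> 0" using lb[of \<theta>] L by (simp_all add: G_def K_def cL_def)
    then have "cL * (1 + V) \<le> cL * ((1 + C1 + C2 + C3 + C3 * K) * (1 + G))"
      using C by (intro mult_left_mono) (simp_all add: V_def algebra_simps add_increasing)
    also have "\<dots> = c * (1 + G)" by (simp add: c_def cL_def K_def ac_simps)
    finally show "G + cL * (1 + V) \<le> (1 + c) * G + c" by (simp add: algebra_simps)
  qed
  finally show ?thesis by (simp add: G_def)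
qed

section \<open>The SGD process\<close>

lemma nn_integral_indep_fresh_sample:
  fixes X :: "nat \<Rightarrow> 'a \<Rightarrow> 'x" and H :: "'b \<times> 'x \<Rightarrow> ennreal"
  assumes M: "prob_space M" and indep: "prob_space.indep_vars M (\<lambda>_. D) X {1..}"
    and distr: "distr M D (X (Suc k)) = D"
    and \<phi>: "\<phi> \<in> measurable (PiM {1..k} (\<lambda>_. D)) N"
    and H: "H \<in> borel_measurable (N \<Otimes>\<^sub>M D)"
  shows "(\<integral>\<^sup>+\<omega>. H (\<phi> (restrict (\<lambda>i. X i \<omega>) {1..k}), X (Suc k) \<omega>) \<partial>M)
    = (\<integral>\<^sup>+\<omega>. (\<integral>\<^sup>+x. H (\<phi> (restrict (\<lambda>i. X i \<omega>) {1..k}), x) \<partial>D) \<partial>M)"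
proof -
  interpret prob_space M by (rule M)
  define I1 where "I1 = PiM {1..k} (\<lambda>_. D)"
  define I2 where "I2 = PiM {Suc k} (\<lambda>_. D)"
  define Y1 where "Y1 \<omega> = restrict (\<lambda>i. X i \<omega>) {1..k}" for \<omega>
  define Y2 where "Y2 \<omega> = restrict (\<lambda>i. X i \<omega>) {Suc k}" for \<omega>
  have X_meas: "X i \<in> measurable M D" if "i \<ge> 1" for i
    using indep that unfolding indep_vars_def by auto
  have Y1: "Y1 \<in> measurable M I1" and Y2: "Y2 \<in> measurable M I2"
    unfolding Y1_def[abs_def] Y2_def[abs_def] I1_def I2_def
    by (auto intro!: measurable_restrict X_meas)
  interpret Q2: prob_space "distr M I2 Y2" by (rule prob_space_distr[OF Y2])
  have "indep_var I1 Y1 I2 Y2"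
    unfolding I1_def I2_def Y1_def[abs_def] Y2_def[abs_def]
    by (rule indep_var_restrict[OF indep]) auto
  then have joint: "distr M (I1 \<Otimes>\<^sub>M I2) (\<lambda>\<omega>. (Y1 \<omega>, Y2 \<omega>)) = distr M I1 Y1 \<Otimes>\<^sub>M distr M I2 Y2"
    by (simp add: indep_var_distribution_eq)
  have last: "(\<lambda>z. z (Suc k)) \<in> measurable I2 D"
    unfolding I2_def by (rule measurable_component_singleton) simp
  define H' where "H' p = H (\<phi> (fst p), snd p (Suc k))" for p
  have H': "H' \<in> borel_measurable (I1 \<Otimes>\<^sub>M I2)"
    unfolding H'_def using \<phi> last H unfolding I1_def by measurable
  have H_sect: "(\<lambda>x. H (y, x)) \<in> borel_measurable D" if "y \<in> space N" for y
    using measurable_Pair2[OF H that] by simp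
  have "(\<integral>\<^sup>+\<omega>. H (\<phi> (Y1 \<omega>), X (Suc k) \<omega>) \<partial>M) = (\<integral>\<^sup>+\<omega>. H' (Y1 \<omega>, Y2 \<omega>) \<partial>M)"
    by (simp add: H'_def Y2_def)
  also have "\<dots> = (\<integral>\<^sup>+p. H' p \<partial>(distr M I1 Y1 \<Otimes>\<^sub>M distr M I2 Y2))"
    using H' Y1 Y2 by (simp add: joint[symmetric] nn_integral_distr)
  also have "\<dots> = (\<integral>\<^sup>+y. (\<integral>\<^sup>+z. H' (y, z) \<partial>distr M I2 Y2) \<partial>distr M I1 Y1)"
    using H' by (intro Q2.nn_integral_fst[symmetric]) simp
  also have "\<dots> = (\<integral>\<^sup>+\<omega>. (\<integral>\<^sup>+z. H' (Y1 \<omega>, z) \<partial>distr M I2 Y2) \<partial>M)"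
    using H' Y1 by (intro nn_integral_distr) (auto intro: Q2.borel_measurable_nn_integral)
  also have "\<dots> = (\<integral>\<^sup>+\<omega>. (\<integral>\<^sup>+x. H (\<phi> (Y1 \<omega>), x) \<partial>D) \<partial>M)"
  proof (rule nn_integral_cong)
    fix \<omega> assume "\<omega> \<in> space M"
    then have y: "\<phi> (Y1 \<omega>) \<in> space N" using \<phi> Y1 unfolding I1_def by (auto intro: measurable_space)
    have "(\<integral>\<^sup>+z. H' (Y1 \<omega>, z) \<partial>distr M I2 Y2) = (\<integral>\<^sup>+\<omega>'. H (\<phi> (Y1 \<omega>), X (Suc k) \<omega>') \<partial>M)"
      using measurable_compose[OF last H_sect[OF y]] Y2 by (simp add: nn_integral_distr H'_def Y2_def)
    also have "\<dots> = (\<integral>\<^sup>+x. H (\<phi> (Y1 \<omega>), x) \<partial>distr M D (X (Suc k)))"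
      using H_sect[OF y] X_meas[of "Suc k"] by (simp add: nn_integral_distr)
    finally show "(\<integral>\<^sup>+z. H' (Y1 \<omega>, z) \<partial>distr M I2 Y2) = (\<integral>\<^sup>+x. H (\<phi> (Y1 \<omega>), x) \<partial>D)"
      by (simp add: distr)
  qed
  finally show ?thesis by (simp add: Y1_def)
qed

lemma ennreal_perturbed_recursion_bound:
  fixes e :: "nat \<Rightarrow> ennreal" and c :: "nat \<Rightarrow> real"
  assumes e0: "e 0 \<le> ennreal a" and a: "0 \<le> a"
    and c: "\<And>k. 0 \<le> c k" "summable c"
    and step: "\<And>k. e (Suc k) \<le> (1 + ennreal (c k)) * e k + ennreal (c k)"
  shows "e k \<le> ennreal ((a + 1) * exp (suminf c))"
proof -
  \<comment> \<open>e k + 1 grows by at most the factor 1 + c k \<le> exp (c k) per step.\<close>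
  have partial: "e k + 1 \<le> ennreal ((a + 1) * exp (\<Sum>j<k. c j))" for k
  proof (induction k)
    case 0
    then show ?case using e0 a by (simp add: ennreal_plus[symmetric] add_right_mono)
  next
    case (Suc k)
    have "e (Suc k) + 1 \<le> (1 + ennreal (c k)) * (e k + 1)"
      using step[of k] by (simp add: add_right_mono algebra_simps)
    also have "\<dots> \<le> ennreal (1 + c k) * ennreal ((a + 1) * exp (\<Sum>j<k. c j))"
      using Suc.IH c(1)[of k] by (simp add: ennreal_plus mult_left_mono)
    also have "\<dots> = ennreal ((1 + c k) * ((a + 1) * exp (\<Sum>j<k. c j)))"
      using a c(1)[of k] by (subst ennreal_mult) auto
    also have "\<dots> \<le> ennreal ((a + 1) * exp (\<Sum>j<Suc k. c j))"
    proof (rule ennreal_leI)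
      have "(1 + c k) * ((a + 1) * exp (\<Sum>j<k. c j)) \<le> exp (c k) * ((a + 1) * exp (\<Sum>j<k. c j))"
        using a c(1)[of k] by (intro mult_right_mono exp_ge_add_one_self_aux) auto
      then show "(1 + c k) * ((a + 1) * exp (\<Sum>j<k. c j)) \<le> (a + 1) * exp (\<Sum>j<Suc k. c j)"
        by (simp add: exp_add ac_simps)
    qed
    finally show ?case .
  qed
  have "(a + 1) * exp (\<Sum>j<k. c j) \<le> (a + 1) * exp (suminf c)"
    using a sum_le_suminf[OF c(2), of "{..<k}"] c(1) by (intro mult_left_mono) auto
  then have "e k + 1 \<le> ennreal ((a + 1) * exp (suminf c))"
    using partial[of k] by (meson ennreal_leI order_trans)
  then show ?thesis by (meson add_increasing2 order_trans zero_le_one order_refl le_iff_add)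
qed

text \<open>The samples are indexed from 1: sgd_path never reads y 0.\<close>

primrec sgd_path ::
  "real^'n \<Rightarrow> (nat \<Rightarrow> real^'n^'n) \<Rightarrow> (real^'n \<Rightarrow> 'x \<Rightarrow> real^'n) \<Rightarrow> nat \<Rightarrow> (nat \<Rightarrow> 'x) \<Rightarrow> real^'n"
where
  "sgd_path \<theta>0 Mk g 0 y = \<theta>0"
| "sgd_path \<theta>0 Mk g (Suc k) y = sgd_path \<theta>0 Mk g k y - Mk k *v g (sgd_path \<theta>0 Mk g k y) (y (Suc k))"

lemma sgd_path_cong:
  "(\<And>i. i \<in> {1..k} \<Longrightarrow> y i = y' i) \<Longrightarrow> sgd_path \<theta>0 Mk g k y = sgd_path \<theta>0 Mk g k y'"
  by (induction k) auto

lemma measurable_sgd_path: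
  assumes g: "(\<lambda>p. g (fst p) (snd p)) \<in> borel_measurable (borel \<Otimes>\<^sub>M D)"
  shows "{1..k} \<subseteq> I \<Longrightarrow> sgd_path \<theta>0 Mk g k \<in> borel_measurable (PiM I (\<lambda>_. D))"
proof (induction k)
  case 0
  have "sgd_path \<theta>0 Mk g 0 = (\<lambda>_. \<theta>0)" by auto
  then show ?case by simp
next
  case (Suc k)
  have "{1..k} \<subseteq> I" "Suc k \<in> I" using Suc.prems by auto
  with Suc.IH have IH: "sgd_path \<theta>0 Mk g k \<in> borel_measurable (PiM I (\<lambda>_. D))" by blast
  with \<open>Suc k \<in> I\<close> have "(\<lambda>y. (sgd_path \<theta>0 Mk g k y, y (Suc k))) \<in> measurable (PiM I (\<lambda>_. D)) (borel \<Otimes>\<^sub>M D)"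
    by (intro measurable_Pair measurable_component_singleton)
  from measurable_compose[OF this g]
  have "(\<lambda>y. g (sgd_path \<theta>0 Mk g k y) (y (Suc k))) \<in> borel_measurable (PiM I (\<lambda>_. D))" by simp
  moreover have "(\<lambda>v. Mk k *v v) \<in> borel_measurable borel"
    by (intro borel_measurable_continuous_onI linear_continuous_on matrix_vector_mul_bounded_linear)
  ultimately have "(\<lambda>y. Mk k *v g (sgd_path \<theta>0 Mk g k y) (y (Suc k))) \<in> borel_measurable (PiM I (\<lambda>_. D))"
    by (rule measurable_compose)
  with IH show ?case by simp
qed

locale sgd_process = prob_space M
  for M :: "'a measure" and D :: "'x measure" and X :: "nat \<Rightarrow> 'a \<Rightarrow> 'x"
    and fdot :: "real^'n \<Rightarrow> 'x \<Rightarrow> real^'n" and F :: "real^'n \<Rightarrow> real" and Fdot :: "real^'n \<Rightarrow> real^'n"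
    and Mk :: "nat \<Rightarrow> real^'n^'n" and theta0 :: "real^'n" and theta :: "nat \<Rightarrow> 'a \<Rightarrow> real^'n"
    and \<alpha> Flb C1 C2 C3 L :: real +
  assumes D_prob: "prob_space D"
    and X_indep: "indep_vars (\<lambda>_. D) X {1..}"
    and X_distr: "\<And>k. k \<ge> 1 \<Longrightarrow> distr M D (X k) = D"
    and fdot_pair: "(\<lambda>p. fdot (fst p) (snd p)) \<in> borel_measurable (borel \<Otimes>\<^sub>M D)"
    and F_diff: "\<And>\<theta>. (F has_derivative (\<lambda>h. Fdot \<theta> \<bullet> h)) (at \<theta>)"
    and theta_0: "\<And>\<omega>. theta 0 \<omega> = theta0"
    and theta_Suc: "\<And>k \<omega>. theta (Suc k) \<omega> = theta k \<omega> - Mk k *v fdot (theta k \<omega>) (X (Suc k) \<omega>)"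
    and P1_sym: "\<And>k. transpose (Mk k) = Mk k"
    and P1_pd: "\<And>k v. v \<noteq> 0 \<Longrightarrow> v \<bullet> (Mk k *v v) > 0"
    and alpha: "0 < \<alpha>" "\<alpha> \<le> 1"
    and P2: "summable (\<lambda>k. lambda_max (Mk (Suc k)) powr (1 + \<alpha>))"
    and A1: "\<And>\<theta>. F \<theta> \<ge> Flb"
    and A2: "\<And>\<theta>. has_bochner_integral D (fdot \<theta>) (Fdot \<theta>)"
    and C_nonneg: "C1 \<ge> 0" "C2 \<ge> 0" "C3 \<ge> 1"
    and A3b: "\<And>\<theta>. (\<integral>\<^sup>+x. ennreal ((norm (fdot \<theta> x))\<^sup>2) \<partial>D)
                 \<le> ennreal (C1 + C2 * (F \<theta> - Flb) + C3 * (norm (Fdot \<theta>))\<^sup>2)"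
    and L_pos: "L > 0"
    and A4b: "\<And>\<phi>1 \<phi>2. norm (Fdot \<phi>1 - Fdot \<phi>2) \<le> L * norm (\<phi>1 - \<phi>2) powr \<alpha>"
begin

definition drift :: "nat \<Rightarrow> real" where
  "drift k = L * (1 + C1 + C2 + C3 + C3 * (2 * (2 * L) powr (1 / \<alpha>))) * lambda_max (Mk k) powr (1 + \<alpha>)"

lemma drift_nonneg: "0 \<le> drift k"
  using L_pos C_nonneg by (simp add: drift_def)

lemma summable_drift: "summable drift"
proof -
  have "summable (\<lambda>k. lambda_max (Mk k) powr (1 + \<alpha>))"
    using P2 by (subst summable_Suc_iff[symmetric])
  then show ?thesis unfolding drift_def[abs_def] by (rule summable_mult)
qed

lemma X_measurable: "i \<ge> 1 \<Longrightarrow> X i \<in> measurable M D"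
  using X_indep unfolding indep_vars_def by auto

lemma theta_eq_sgd_path: "theta k \<omega> = sgd_path theta0 Mk fdot k (restrict (\<lambda>i. X i \<omega>) {1..k})"
proof -
  have "theta k \<omega> = sgd_path theta0 Mk fdot k (\<lambda>i. X i \<omega>)"
    by (induction k) (simp_all add: theta_0 theta_Suc)
  also have "\<dots> = sgd_path theta0 Mk fdot k (restrict (\<lambda>i. X i \<omega>) {1..k})"
    by (rule sgd_path_cong) simp
  finally show ?thesis .
qed

lemma theta_measurable: "theta k \<in> borel_measurable M"
proof -
  have "(\<lambda>\<omega>. restrict (\<lambda>i. X i \<omega>) {1..k}) \<in> measurable M (PiM {1..k} (\<lambda>_. D))"
    by (intro measurable_restrict X_measurable) simp
  from measurable_compose[OF this measurable_sgd_path[OF fdot_pair order_refl]]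
  show ?thesis by (simp add: theta_eq_sgd_path[abs_def])
qed

lemma F_measurable: "F \<in> borel_measurable borel"
  using F_diff by (intro borel_measurable_continuous_onI continuous_at_imp_continuous_on ballI
      has_derivative_continuous)

lemma expected_suboptimality_step:
  "(\<integral>\<^sup>+\<omega>. ennreal (F (theta (Suc k) \<omega>) - Flb) \<partial>M)
    \<le> (1 + ennreal (drift k)) * (\<integral>\<^sup>+\<omega>. ennreal (F (theta k \<omega>) - Flb) \<partial>M) + ennreal (drift k)"
proof -
  define H where "H p = ennreal (F (fst p - Mk k *v fdot (fst p) (snd p)) - Flb)" for p
  have "(\<lambda>v::real^'n. Mk k *v v) \<in> borel_measurable borel"
    by (intro borel_measurable_continuous_onI linear_continuous_on matrix_vector_mul_bounded_linear)
  from measurable_compose[OF fdot_pair this]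
  have H: "H \<in> borel_measurable (borel \<Otimes>\<^sub>M D)"
    unfolding H_def using F_measurable by measurable
  have fdot_meas: "fdot \<theta> \<in> borel_measurable D" for \<theta>
    using measurable_Pair2[OF fdot_pair, of \<theta>] by simp
  have "(\<integral>\<^sup>+\<omega>. ennreal (F (theta (Suc k) \<omega>) - Flb) \<partial>M) = (\<integral>\<^sup>+\<omega>. H (theta k \<omega>, X (Suc k) \<omega>) \<partial>M)"
    by (simp add: H_def theta_Suc)
  also have "\<dots> = (\<integral>\<^sup>+\<omega>. (\<integral>\<^sup>+x. H (theta k \<omega>, x) \<partial>D) \<partial>M)"
    unfolding theta_eq_sgd_path
    by (rule nn_integral_indep_fresh_sample[OF prob_space_axioms X_indep X_distr
          measurable_sgd_path[OF fdot_pair order_refl] H]) simp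
  also have "\<dots> \<le> (\<integral>\<^sup>+\<omega>. ennreal ((1 + drift k) * (F (theta k \<omega>) - Flb) + drift k) \<partial>M)"
    using sgd_step_expectation_bound[OF D_prob fdot_meas F_diff P1_sym P1_pd alpha A1 A2 _ _ _ A3b
        L_pos A4b] C_nonneg
    by (intro nn_integral_mono) (simp add: H_def drift_def)
  also have "\<dots> = (1 + ennreal (drift k)) * (\<integral>\<^sup>+\<omega>. ennreal (F (theta k \<omega>) - Flb) \<partial>M) + ennreal (drift k)"
    using drift_nonneg[of k] A1 theta_measurable F_measurable
    by (simp add: ennreal_plus ennreal_mult nn_integral_add nn_integral_cmult emeasure_space_1
        distrib_right)
  finally show ?thesis .
qed

definition suboptimality_bound :: real where
  "suboptimality_bound = (F theta0 - Flb + 1) * exp (suminf drift)"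

lemma suboptimality_bound_nonneg: "0 \<le> suboptimality_bound"
  using A1[of theta0] by (simp add: suboptimality_bound_def)

lemma expected_suboptimality_le:
  "(\<integral>\<^sup>+\<omega>. ennreal (F (theta k \<omega>) - Flb) \<partial>M) \<le> ennreal suboptimality_bound"
  unfolding suboptimality_bound_def
  using A1[of theta0] drift_nonneg summable_drift expected_suboptimality_step
  by (intro ennreal_perturbed_recursion_bound) (simp_all add: theta_0 emeasure_space_1)

lemma suboptimality_measurable: "(\<lambda>\<omega>. F (theta k \<omega>) - Flb) \<in> borel_measurable M"
  using theta_measurable F_measurable by measurable

lemma
  shows integrable_suboptimality: "integrable M (\<lambda>\<omega>. F (theta k \<omega>) - Flb)"
    and expected_suboptimality_le_bound: "(\<integral>\<omega>. F (theta k \<omega>) - Flb \<partial>M) \<le> suboptimality_bound"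
  using integrable_if_nn_integral_le[OF suboptimality_measurable _ suboptimality_bound_nonneg
      expected_suboptimality_le]
    integral_le_if_nn_integral_le[OF suboptimality_measurable _ suboptimality_bound_nonneg
      expected_suboptimality_le]
    A1
  by auto

lemma integrable_F_theta: "integrable M (\<lambda>\<omega>. F (theta k \<omega>))"
proof -
  have "integrable M (\<lambda>\<omega>. (F (theta k \<omega>) - Flb) + Flb)"
    by (intro Bochner_Integration.integrable_add integrable_suboptimality) simp
  then show ?thesis by simp
qed

lemma bdd_above_expected_F_theta: "bdd_above (range (\<lambda>k. \<integral>\<omega>. F (theta k \<omega>) \<partial>M))"
proof (rule bdd_aboveI2)
  fix k
  have "(\<integral>\<omega>. F (theta k \<omega>) \<partial>M) = (\<integral>\<omega>. F (theta k \<omega>) - Flb \<partial>M) + Flb"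
    using integrable_F_theta[of k] by (simp add: prob_space)
  with expected_suboptimality_le_bound[of k]
  show "(\<integral>\<omega>. F (theta k \<omega>) \<partial>M) \<le> suboptimality_bound + Flb" by simp
qed

lemma tendsto_nn_integral_rpow_suboptimality:
  assumes "Flim \<in> borel_measurable M" and "AE \<omega> in M. (\<lambda>k. F (theta k \<omega>)) \<longlonglongrightarrow> Flim \<omega>"
    and \<gamma>: "0 \<le> \<gamma>" "\<gamma> < 1"
  shows "(\<lambda>k. \<integral>\<^sup>+\<omega>. ennreal \<bar>rpow (F (theta k \<omega>) - Flb) \<gamma> - rpow (Flim \<omega> - Flb) \<gamma>\<bar> \<partial>M)
    \<longlonglongrightarrow> 0"
proof (cases "\<gamma> = 0")
  case False
  have "AE \<omega> in M. (\<lambda>k. F (theta k \<omega>) - Flb) \<longlonglongrightarrow> Flim \<omega> - Flb"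
    using assms(2) by eventually_elim (rule tendsto_diff[OF _ tendsto_const])
  with False \<gamma> A1 assms(1) show ?thesis
    by (simp add: rpow_def tendsto_nn_integral_powr_diff[OF prob_space_axioms suboptimality_measurable
        _ _ _ expected_suboptimality_le suboptimality_bound_nonneg])
qed (simp add: rpow_def)

end

theorem mainTheorem13:
  fixes M :: "'a measure" and D :: "'x measure"
    and X :: "nat \<Rightarrow> 'a \<Rightarrow> 'x"
    and f :: "real^'n \<Rightarrow> 'x \<Rightarrow> real" and fdot :: "real^'n \<Rightarrow> 'x \<Rightarrow> real^'n"
    and F :: "real^'n \<Rightarrow> real" and Fdot :: "real^'n \<Rightarrow> real^'n"
    and Mk :: "nat \<Rightarrow> real^'n^'n" and theta0 :: "real^'n"
    and theta :: "nat \<Rightarrow> 'a \<Rightarrow> real^'n"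
    and Flim :: "'a \<Rightarrow> real"
    and \<alpha> Flb C1 C2 C3 L :: real
  assumes M_prob: "prob_space M" and D_prob: "prob_space D"
    \<comment> \<open>X_1, X_2, ... i.i.d. with common law D (the law of X)\<close>
    and X_indep: "prob_space.indep_vars M (\<lambda>_. D) X {1..}"
    and X_distr: "\<And>k. k \<ge> 1 \<Longrightarrow> distr M D (X k) = D"
    \<comment> \<open>f(., x) differentiable with gradient fdot(., x); fdot measurable in x\<close>
    and f_diff: "\<And>\<theta> x. ((\<lambda>t. f t x) has_derivative (\<lambda>h. fdot \<theta> x \<bullet> h)) (at \<theta>)"
    and fdot_meas: "\<And>\<theta>. fdot \<theta> \<in> borel_measurable D"
    \<comment> \<open>F = E f(., X) finite and differentiable with gradient Fdot\<close>
    and f_int: "\<And>\<theta>. integrable D (f \<theta>)"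
    and F_def: "\<And>\<theta>. F \<theta> = (\<integral>x. f \<theta> x \<partial>D)"
    and F_diff: "\<And>\<theta>. (F has_derivative (\<lambda>h. Fdot \<theta> \<bullet> h)) (at \<theta>)"
    \<comment> \<open>SGD recursion\<close>
    and theta_0: "\<And>\<omega>. theta 0 \<omega> = theta0"
    and theta_Suc: "\<And>k \<omega>. theta (Suc k) \<omega> = theta k \<omega> - Mk k *v fdot (theta k \<omega>) (X (Suc k) \<omega>)"
    \<comment> \<open>(P1)\<close>
    and P1_sym: "\<And>k. transpose (Mk k) = Mk k"
    and P1_pd: "\<And>k v. v \<noteq> 0 \<Longrightarrow> v \<bullet> (Mk k *v v) > 0"
    \<comment> \<open>(P2)\<close>
    and alpha: "0 < \<alpha>" "\<alpha> \<le> 1"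
    and P2: "summable (\<lambda>k. lambda_max (Mk (Suc k)) powr (1 + \<alpha>))"
    \<comment> \<open>(P4)\<close>
    and P4: "(\<lambda>k. lambda_max (Mk k) powr \<alpha> * cond_num (Mk k)) \<longlonglongrightarrow> 0"
    \<comment> \<open>(A1)\<close>
    and A1: "\<And>\<theta>. F \<theta> \<ge> Flb"
    \<comment> \<open>(A2)\<close>
    and A2: "\<And>\<theta>. has_bochner_integral D (fdot \<theta>) (Fdot \<theta>)"
    \<comment> \<open>(A3b)\<close>
    and C_nonneg: "C1 \<ge> 0" "C2 \<ge> 0" "C3 \<ge> 1"
    and A3b: "\<And>\<theta>. (\<integral>\<^sup>+x. ennreal ((norm (fdot \<theta> x))\<^sup>2) \<partial>D)
                 \<le> ennreal (C1 + C2 * (F \<theta> - Flb) + C3 * (norm (Fdot \<theta>))\<^sup>2)"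
    \<comment> \<open>(A4b)\<close>
    and L_pos: "L > 0"
    and A4b: "\<And>\<phi>1 \<phi>2. norm (Fdot \<phi>1 - Fdot \<phi>2) \<le> L * norm (\<phi>1 - \<phi>2) powr \<alpha>"
    \<comment> \<open>F_lim: the almost-sure limit of F(theta_k)\<close>
    and Flim_meas: "Flim \<in> borel_measurable M"
    and Flim_lim: "AE \<omega> in M. (\<lambda>k. F (theta k \<omega>)) \<longlonglongrightarrow> Flim \<omega>"
  shows "(\<forall>k. integrable M (\<lambda>\<omega>. F (theta k \<omega>)))
         \<and> bdd_above (range (\<lambda>k. \<integral>\<omega>. F (theta k \<omega>) \<partial>M))
         \<and> (\<forall>\<gamma>::real. 0 \<le> \<gamma> \<and> \<gamma> < 1 \<longrightarrow>
              (\<lambda>k. \<integral>\<^sup>+\<omega>. ennreal \<bar>rpow (F (theta k \<omega>) - Flb) \<gamma> - rpow (Flim \<omega> - Flb) \<gamma>\<bar> \<partial>M)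
                \<longlonglongrightarrow> 0)"
proof -
  have fdot_pair: "(\<lambda>p. fdot (fst p) (snd p)) \<in> borel_measurable (borel \<Otimes>\<^sub>M D)"
    using f_diff borel_measurable_integrable[OF f_int] by (rule borel_measurable_gradient_pair)
  interpret sgd_process M D X fdot F Fdot Mk theta0 theta \<alpha> Flb C1 C2 C3 L
    by (intro sgd_process.intro sgd_process_axioms.intro) (fact assms fdot_pair)+
  show ?thesis
    using integrable_F_theta bdd_above_expected_F_theta
      tendsto_nn_integral_rpow_suboptimality[OF Flim_meas Flim_lim]
    by blast
qed

end
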